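(* Let $C=\{c_1,\dots,c_m\}$ and let $\mathcal{T}=\mathrm{CP}(c_1,\dots,c_m)$. Given a vote $v$ over $C$, let $\widehat{v}$ be the vote over $C$ such that, for each $j\in[m]$, if $c_j$ is ranked in position $i$ in $v$, then $c_i$ is ranked in position $m-j+1$ in $\widehat{v}$. If $v$ is in the support of $\mathcal{D}_{\mathrm{GS}}^{\mathcal{T}}$, then $\widehat{v}$ is single-peaked with respect to the axis $c_1\lhd c_2\lhd\dots\lhd c_m$.
   Context: A vote over $C$ is a total order on $C$ (position 1 is the top). $\mathrm{CP}(c_1,\dots,c_m)$ is the rooted ordered binary caterpillar tree with internal nodes $x_1,\dots,x_{m-1}$ (root $x_1$), where for $j\in[m-2]$ node $x_j$ has left child $c_j$ and right child $x_{j+1}$, and $x_{m-1}$ has children $c_{m-1}$ (left) and $c_m$ (right). A vote is consistent with $\mathcal{T}$ if it equals the left-to-right order of leaves of the tree obtained by reversing the order of children of some set of internal nodes; $\mathcal{D}_{\mathrm{GS}}^{\mathcal{T}}$ is the uniform distribution over votes consistent with $\mathcal{T}$, so its support is the set of consistent votes. A vote $v$ is single-peaked with respect to an axis (a linear order $\lhd$ of $C$) if for every $t\in[m]$ the $t$ top-ranked candidates of $v$ form an interval of $\lhd$. *)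

theory Defs
  imports Main
begin

datatype 'a btree = Leaf 'a | Node "'a btree" "'a btree"

text \<open>Caterpillar tree CP(c_1,...,c_m): node x_j has left child c_j and right child x_{j+1};
the last internal node has children c_{m-1} (left) and c_m (right).
(For a single candidate we return the leaf; the theorem assumes m >= 2.)\<close>
fun caterpillar :: "'a list \<Rightarrow> 'a btree" where
  "caterpillar [] = undefined"
| "caterpillar [c] = Leaf c"
| "caterpillar (c # d # cs) = Node (Leaf c) (caterpillar (d # cs))"

text \<open>Internal nodes are identified by their path from the root (False = left, True = right).
leaves_flip S p t is the left-to-right leaf order of subtree t (located at path p) after
reversing the children of every internal node whose path lies in S.\<close>
fun leaves_flip :: "bool list set \<Rightarrow> bool list \<Rightarrow> 'a btree \<Rightarrow> 'a list" where
  "leaves_flip S p (Leaf c) = [c]"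
| "leaves_flip S p (Node l r) =
     (if p \<in> S then leaves_flip S (p @ [True]) r @ leaves_flip S (p @ [False]) l
      else leaves_flip S (p @ [False]) l @ leaves_flip S (p @ [True]) r)"

text \<open>A vote is consistent with T if it is the leaf order of T after reversing the children
of some set of internal nodes. The support of D_GS^T is exactly the set of consistent votes.\<close>
definition consistent_with :: "'a btree \<Rightarrow> 'a list \<Rightarrow> bool" where
  "consistent_with T v \<longleftrightarrow> (\<exists>S. v = leaves_flip S [] T)"

definition gs_support :: "'a btree \<Rightarrow> 'a list set" where
  "gs_support T = {v. consistent_with T v}"

text \<open>Votes over C are lists: a vote is a distinct list enumerating C, position 1 = head.\<close>
definition is_vote :: "'a set \<Rightarrow> 'a list \<Rightarrow> bool" where
  "is_vote C v \<longleftrightarrow> distinct v \<and> set v = C"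

text \<open>Interval of the axis (given as a list, first element leftmost).\<close>
definition axis_interval :: "'a list \<Rightarrow> 'a set \<Rightarrow> bool" where
  "axis_interval ax S \<longleftrightarrow> (\<exists>a b. a \<le> b \<and> b < length ax \<and> S = {ax ! k | k. a \<le> k \<and> k \<le> b})"

definition single_peaked :: "'a list \<Rightarrow> 'a list \<Rightarrow> bool" where
  "single_peaked ax v \<longleftrightarrow> (\<forall>t. 1 \<le> t \<and> t \<le> length v \<longrightarrow> axis_interval ax (set (take t v)))"

definition pos :: "'a list \<Rightarrow> 'a \<Rightarrow> nat" where
  "pos v x = (LEAST i. i < length v \<and> v ! i = x)"

text \<open>hat v: if c_j is in position i of v then c_i is in position m-j+1 of hat v
(1-based). In 0-based indices: if v!i = cs!j then (hat v)!(m-1-j) = cs!i, i.e.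
(hat v)!k = cs ! (pos v (cs ! (m-1-k))).\<close>
definition hat_vote :: "'a list \<Rightarrow> 'a list \<Rightarrow> 'a list" where
  "hat_vote cs v = map (\<lambda>k. cs ! pos v (cs ! (length cs - 1 - k))) [0..<length cs]"

end

theory Submission
  imports Defs "HOL-Library.Sublist"
begin

text \<open>Reversing children of the caterpillar only decides, at each node x_j, whether c_j goes
in front of or behind the leaves below x_{j+1}; so every suffix {c_j,...,c_m} fills a contiguous
block of positions of v. The entries of hat v are, for c_m, c_{m-1}, ..., c_1 in turn, the
candidate whose index is that candidate's position in v; hence its top t entries are the
candidates indexed by the block of {c_{m-t+1},...,c_m}, an interval of the axis.\<close>

definition contiguous_in :: "'a list \<Rightarrow> 'a set \<Rightarrow> bool" where
  "contiguous_in v X \<longleftrightarrow> (\<exists>xs. sublist xs v \<and> set xs = X)"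

lemma contiguous_in_empty: "contiguous_in v {}"
  unfolding contiguous_in_def by blast

lemma contiguous_in_set: "contiguous_in v (set v)"
  unfolding contiguous_in_def by blast

lemma contiguous_in_Cons: "contiguous_in w X \<Longrightarrow> contiguous_in (c # w) X"
  unfolding contiguous_in_def by (auto simp: sublist_Cons_right)

lemma contiguous_in_snoc: "contiguous_in w X \<Longrightarrow> contiguous_in (w @ [c]) X"
  unfolding contiguous_in_def by (auto simp: sublist_snoc)

lemma set_leaves_flip_caterpillar:
  "cs \<noteq> [] \<Longrightarrow> set (leaves_flip S p (caterpillar cs)) = set cs"
  by (induction cs arbitrary: p rule: caterpillar.induct) auto

lemma contiguous_in_leaves_flip_caterpillar:
  "contiguous_in (leaves_flip S p (caterpillar cs)) (set (drop j cs))"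
proof (induction cs arbitrary: p j rule: caterpillar.induct)
  case 1
  show ?case
    by (simp add: contiguous_in_empty)
next
  case (2 c)
  show ?case
    using contiguous_in_set[of "[c]"] by (cases j) (simp_all add: contiguous_in_empty)
next
  case (3 c d cs)
  show ?case
  proof (cases j)
    case 0
    have "set (c # d # cs) = set (leaves_flip S p (caterpillar (c # d # cs)))"
      by (rule set_leaves_flip_caterpillar[symmetric]) simp
    then show ?thesis
      unfolding 0 drop_0 by (simp only: contiguous_in_set)
  next
    case (Suc j')
    let ?w = "leaves_flip S (p @ [True]) (caterpillar (d # cs))"
    have "contiguous_in ?w (set (drop j' (d # cs)))"
      by (rule "3.IH")
    then show ?thesis
      using Suc by (simp add: contiguous_in_Cons contiguous_in_snoc)
  qed
qed

lemma pos_nth: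
  assumes "distinct v" "i < length v"
  shows "pos v (v ! i) = i"
  unfolding pos_def using assms by (intro Least_equality) (auto simp: nth_eq_iff_index_eq)

lemma pos_image_infix:
  assumes "distinct (us @ xs @ ws)"
  shows "pos (us @ xs @ ws) ` set xs = {length us..<length us + length xs}"
proof -
  let ?v = "us @ xs @ ws"
  have "set xs = (\<lambda>i. ?v ! (length us + i)) ` {0..<length xs}"
    by (simp add: nth_append nth_image)
  then have "pos ?v ` set xs = (\<lambda>i. pos ?v (?v ! (length us + i))) ` {0..<length xs}"
    by (simp add: image_image)
  also have "\<dots> = (\<lambda>i. length us + i) ` {0..<length xs}"
    by (intro image_cong refl, rule pos_nth[OF assms]) simp
  finally show ?thesis
    by (simp add: add.commute)
qed

lemma hat_vote_eq_map_rev: "hat_vote cs v = map (\<lambda>x. cs ! pos v x) (rev cs)"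
  unfolding hat_vote_def by (intro nth_equalityI) (auto simp: rev_nth)

lemma set_take_hat_vote:
  "set (take t (hat_vote cs v)) = (\<lambda>x. cs ! pos v x) ` set (drop (length cs - t) cs)"
  by (simp add: hat_vote_eq_map_rev take_map take_rev)

lemma axis_interval_image_nth:
  assumes "a < b" "b \<le> length ax"
  shows "axis_interval ax (nth ax ` {a..<b})"
proof -
  obtain c where b: "b = Suc c"
    using assms(1) by (cases b) auto
  then have "nth ax ` {a..<b} = {ax ! k | k. a \<le> k \<and> k \<le> c}"
    by auto
  then show ?thesis
    unfolding axis_interval_def using assms b by (intro exI[of _ a] exI[of _ c]) simp
qed

lemma length_vote:
  assumes "distinct cs" "is_vote (set cs) v"
  shows "length v = length cs"
  using assms by (metis distinct_card is_vote_def)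

lemma is_vote_hat_vote:
  assumes "distinct cs" "is_vote (set cs) v"
  shows "is_vote (set cs) (hat_vote cs v)"
proof -
  have "distinct v" "set v = set cs"
    using assms(2) by (auto simp: is_vote_def)
  moreover have "length v = length cs"
    using assms by (rule length_vote)
  ultimately have pos_set: "pos v ` set cs = {0..<length cs}"
    using pos_image_infix[of "[]" v "[]"] by simp
  have len_hat: "length (hat_vote cs v) = length cs"
    by (simp add: hat_vote_def)
  then have "set (hat_vote cs v) = nth cs ` pos v ` set cs"
    using set_take_hat_vote[of "length cs" cs v] by (simp add: image_image)
  also have "\<dots> = set cs"
    by (simp add: pos_set nth_image)
  finally have set_hat: "set (hat_vote cs v) = set cs" .
  then have "distinct (hat_vote cs v)"
    using assms(1) len_hat by (intro card_distinct) (simp add: distinct_card)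
  with set_hat show ?thesis
    by (simp add: is_vote_def)
qed

lemma single_peaked_hat_vote:
  assumes "distinct v" "length v = length cs"
    and suffixes: "\<And>j. contiguous_in v (set (drop j cs))"
  shows "single_peaked cs (hat_vote cs v)"
  unfolding single_peaked_def
proof (intro allI impI)
  fix t
  assume t: "1 \<le> t \<and> t \<le> length (hat_vote cs v)"
  let ?suffix = "drop (length cs - t) cs"
  obtain us xs ws where v: "v = us @ xs @ ws" and xs: "set xs = set ?suffix"
    using suffixes[of "length cs - t"] unfolding contiguous_in_def sublist_def by blast
  have "?suffix \<noteq> []"
    using t by (auto simp: hat_vote_def)
  then have "xs \<noteq> []"
    using xs by auto
  moreover have "length us + length xs \<le> length cs"
    using v assms(2) by simp
  moreover have "pos v ` set xs = {length us..<length us + length xs}"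
    using assms(1) unfolding v by (rule pos_image_infix)
  moreover have "set (take t (hat_vote cs v)) = nth cs ` pos v ` set xs"
    by (simp add: set_take_hat_vote xs image_image)
  ultimately show "axis_interval cs (set (take t (hat_vote cs v)))"
    by (simp add: axis_interval_image_nth)
qed

theorem theorem3:
  fixes cs :: "'a list" and v :: "'a list"
  assumes "distinct cs" and "length cs \<ge> 2"
    and "is_vote (set cs) v"
    and "v \<in> gs_support (caterpillar cs)"
  shows "is_vote (set cs) (hat_vote cs v) \<and> single_peaked cs (hat_vote cs v)"
proof
  show "is_vote (set cs) (hat_vote cs v)"
    using assms(1,3) by (rule is_vote_hat_vote)
  have "distinct v"
    using assms(3) by (simp add: is_vote_def)
  moreover have "length v = length cs"
    using assms(1,3) by (rule length_vote)
  moreover obtain S where "v = leaves_flip S [] (caterpillar cs)"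
    using assms(4) by (auto simp: gs_support_def consistent_with_def)
  ultimately show "single_peaked cs (hat_vote cs v)"
    using contiguous_in_leaves_flip_caterpillar by (metis single_peaked_hat_vote)
qed

end
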